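(* Let $n,m\ge 2$ be integers and $P_n,P_m$ paths on $n$ and $m$ vertices. Then $AT(P_n+_Q P_m)=2$ if $n=m=2$, and $AT(P_n+_Q P_m)=3$ otherwise.
   Context: For an orientation $D$, a subdigraph is Eulerian if every vertex has equal in- and outdegree in it; $D$ is an AT-orientation if the numbers of Eulerian subgraphs with an even and with an odd number of arcs differ; $AT(G)$ is the smallest $k$ such that $G$ has an AT-orientation of maximum outdegree at most $k-1$. $Q(G)$ has vertex set $V(G)\cup E(G)$: it is $S(G)$ (each edge $e=xy$ replaced by the path $x\,e\,y$) plus edges $ee'$ whenever edges $e,e'$ are adjacent in $G$. $G+_Q H$ has vertex set $(V(G)\cup E(G))\times V(H)$, with $(u_1,u_2)\sim(v_1,v_2)$ iff [$u_1=v_1\in V(G)$ and $u_2v_2\in E(H)$] or [$u_2=v_2$ and $u_1v_1\in E(Q(G))$]. *)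

theory Defs
  imports Main
begin

text \<open>A finite simple graph: vertex set and set of edges, each edge a 2-element vertex set.\<close>
type_synonym 'a graph = "'a set \<times> 'a set set"

definition verts :: "'a graph \<Rightarrow> 'a set" where "verts G = fst G"
definition edges :: "'a graph \<Rightarrow> 'a set set" where "edges G = snd G"

definition path_graph :: "nat \<Rightarrow> nat graph" where
  "path_graph n = ({0..<n}, {{i, Suc i} | i. Suc i < n})"

text \<open>Q(G): vertices V(G) (as Inl) and E(G) (as Inr); subdivision edges x--e for x in e,
  plus edges e--e' for distinct adjacent edges e, e'.\<close>
definition Q_graph :: "'a graph \<Rightarrow> ('a + 'a set) graph" where
  "Q_graph G = (Inl ` verts G \<union> Inr ` edges G,
     {{Inl x, Inr e} | x e. e \<in> edges G \<and> x \<in> e}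
     \<union> {{Inr e, Inr e'} | e e'. e \<in> edges G \<and> e' \<in> edges G \<and> e \<noteq> e' \<and> e \<inter> e' \<noteq> {}})"

definition Q_sum :: "'a graph \<Rightarrow> 'b graph \<Rightarrow> (('a + 'a set) \<times> 'b) graph" where
  "Q_sum G H = (verts (Q_graph G) \<times> verts H,
     {{(Inl x, a), (Inl x, b)} | x a b. x \<in> verts G \<and> {a, b} \<in> edges H}
     \<union> {{(u, a), (v, a)} | u v a. a \<in> verts H \<and> {u, v} \<in> edges (Q_graph G)})"

definition is_orientation :: "'a graph \<Rightarrow> ('a \<times> 'a) set \<Rightarrow> bool" where
  "is_orientation G D \<longleftrightarrow>
     (\<forall>(x, y) \<in> D. x \<noteq> y \<and> {x, y} \<in> edges G) \<and>
     (\<forall>e \<in> edges G. \<exists>!a. a \<in> D \<and> {fst a, snd a} = e)"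

definition outdeg :: "('a \<times> 'a) set \<Rightarrow> 'a \<Rightarrow> nat" where
  "outdeg A v = card {a \<in> A. fst a = v}"

definition indeg :: "('a \<times> 'a) set \<Rightarrow> 'a \<Rightarrow> nat" where
  "indeg A v = card {a \<in> A. snd a = v}"

definition eulerian :: "'a set \<Rightarrow> ('a \<times> 'a) set \<Rightarrow> bool" where
  "eulerian V A \<longleftrightarrow> (\<forall>v \<in> V. indeg A v = outdeg A v)"

definition even_eulerian :: "'a graph \<Rightarrow> ('a \<times> 'a) set \<Rightarrow> nat" where
  "even_eulerian G D = card {A. A \<subseteq> D \<and> eulerian (verts G) A \<and> even (card A)}"

definition odd_eulerian :: "'a graph \<Rightarrow> ('a \<times> 'a) set \<Rightarrow> nat" where
  "odd_eulerian G D = card {A. A \<subseteq> D \<and> eulerian (verts G) A \<and> odd (card A)}"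

definition AT_orientation :: "'a graph \<Rightarrow> ('a \<times> 'a) set \<Rightarrow> bool" where
  "AT_orientation G D \<longleftrightarrow> is_orientation G D \<and> even_eulerian G D \<noteq> odd_eulerian G D"

definition AT :: "'a graph \<Rightarrow> nat" where
  "AT G = (LEAST k. \<exists>D. AT_orientation G D \<and> (\<forall>v \<in> verts G. outdeg D v + 1 \<le> k))"

end

theory Submission
  imports Defs
begin

(* An acyclic orientation is an AT-orientation: its only Eulerian subdigraph is the empty one.
   Orienting P_n +_Q P_m rightwards along Q(P_n) and upwards along the copies of P_m gives an
   acyclic orientation of maximum outdegree 2, hence AT <= 3. If n >= 3 the graph contains
   two triangles of Q(P_3) joined by an edge (7 edges on 6 vertices), and if m >= 3 three stacked
   copies of Q(P_2) (10 edges on 9 vertices); in either case every orientation has a vertex of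
   outdegree at least 2, so AT >= 3. For n = m = 2 the graph is a 6-cycle, whose cyclic
   orientation has outdegree 1 and only two Eulerian subdigraphs, the empty one and the whole
   cycle, both of even size; so AT = 2. *)

section \<open>Orientations, Eulerian subdigraphs and AT\<close>

lemma outdeg_conv_card: "outdeg D v = card {w. (v, w) \<in> D}"
proof -
  have "{a \<in> D. fst a = v} = Pair v ` {w. (v, w) \<in> D}" by force
  then show ?thesis unfolding outdeg_def by (simp add: card_image inj_on_def)
qed

lemma outdeg_le_1_if_single_valued:
  assumes "finite D" "single_valued D"
  shows "outdeg D v \<le> 1"
proof -
  have "finite {w. (v, w) \<in> D}"
    using finite_imageI[OF assms(1), of snd] by (rule finite_subset[rotated]) force
  then show ?thesis
    using assms(2) by (simp add: outdeg_conv_card card_le_Suc0_iff_eq single_valued_def)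
qed

lemma eulerian_out_arc:
  assumes "finite A" "eulerian V A" "v \<in> V" "(u, v) \<in> A"
  obtains w where "(v, w) \<in> A"
proof -
  have "indeg A v \<noteq> 0"
    using assms(1,4) unfolding indeg_def by (subst card_0_eq) force+
  then have "outdeg A v \<noteq> 0"
    using assms(2,3) unfolding eulerian_def by simp
  then have "{w. (v, w) \<in> A} \<noteq> {}"
    unfolding outdeg_conv_card by (metis card.empty)
  then show ?thesis
    using that by blast
qed

lemma eulerian_ranked_empty:
  fixes r :: "'a \<Rightarrow> 'b::linorder"
  assumes "finite A" "eulerian V A" "snd ` A \<subseteq> V" "\<And>x y. (x, y) \<in> A \<Longrightarrow> r x < r y"
  shows "A = {}"
proof (rule ccontr)
  assume "A \<noteq> {}"
  then obtain u v where uv: "(u, v) \<in> A" "r v = Max (r ` snd ` A)"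
    using Max_in[of "r ` snd ` A"] assms(1) by fastforce
  have "v \<in> V"
    using uv(1) assms(3) by force
  then obtain w where "(v, w) \<in> A"
    using eulerian_out_arc[OF assms(1,2) _ uv(1)] by blast
  then have "r w \<le> r v" "r v < r w"
    using uv(2) assms(1,4) by (force intro: Max_ge)+
  then show False by simp
qed

lemma eulerian_single_valued_closed:
  assumes "A \<subseteq> D" "finite D" "single_valued D" "eulerian V A" "v \<in> V" "(u, v) \<in> A" "(v, w) \<in> D"
  shows "(v, w) \<in> A"
proof -
  obtain w' where "(v, w') \<in> A"
    using eulerian_out_arc[OF finite_subset[OF assms(1,2)] assms(4-6)] .
  moreover have "w' = w"
    using calculation assms(1,3,7) unfolding single_valued_def by blast
  ultimately show ?thesis by simp
qed

lemma orientation_arc_edge: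
  assumes "is_orientation G D" "(x, y) \<in> D"
  shows "{x, y} \<in> edges G"
  using assms unfolding is_orientation_def by fast

lemma orientation_edge_arc:
  assumes "is_orientation G D" "e \<in> edges G"
  obtains a where "a \<in> D" "{fst a, snd a} = e"
proof -
  have "\<exists>!a. a \<in> D \<and> {fst a, snd a} = e"
    using assms unfolding is_orientation_def by simp
  then show thesis
    using that by blast
qed

lemma orientation_arc_in_verts:
  assumes "is_orientation G D" "\<Union>(edges G) \<subseteq> verts G" "(x, y) \<in> D"
  shows "x \<in> verts G" "y \<in> verts G"
  using orientation_arc_edge[OF assms(1,3)] assms(2) by blast+

lemma finite_orientation:
  assumes "is_orientation G D" "\<Union>(edges G) \<subseteq> verts G" "finite (verts G)"
  shows "finite D"
proof -
  have "D \<subseteq> verts G \<times> verts G"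
    using orientation_arc_in_verts[OF assms(1,2)] by auto
  then show ?thesis
    using assms(3) by (simp add: finite_subset)
qed

lemma is_orientationI:
  assumes "edges G = (\<lambda>(x, y). {x, y}) ` D" "\<And>x y. (x, y) \<in> D \<Longrightarrow> (y, x) \<notin> D"
  shows "is_orientation G D"
  unfolding is_orientation_def
proof (intro conjI ballI)
  show "case a of (x, y) \<Rightarrow> x \<noteq> y \<and> {x, y} \<in> edges G" if "a \<in> D" for a
    using that assms by force
  show "\<exists>!a. a \<in> D \<and> {fst a, snd a} = e" if "e \<in> edges G" for e
    using that assms by (fastforce simp: doubleton_eq_iff)
qed

lemma AT_orientation_if_eulerian_even:
  assumes "is_orientation G D" "finite D" "\<And>A. A \<subseteq> D \<Longrightarrow> eulerian (verts G) A \<Longrightarrow> even (card A)"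
  shows "AT_orientation G D"
proof -
  have no_odd: "{A. A \<subseteq> D \<and> eulerian (verts G) A \<and> odd (card A)} = {}"
    using assms(3) by blast
  have "odd_eulerian G D = 0"
    unfolding odd_eulerian_def no_odd by simp
  moreover have "even_eulerian G D \<noteq> 0"
  proof -
    define E where "E = {A. A \<subseteq> D \<and> eulerian (verts G) A \<and> even (card A)}"
    have "{} \<in> E"
      unfolding E_def by (simp add: eulerian_def indeg_def outdeg_def)
    moreover have "finite E"
      unfolding E_def using assms(2) by simp
    ultimately have "card E \<noteq> 0"
      by (auto simp: card_eq_0_iff)
    then show ?thesis
      unfolding even_eulerian_def E_def .
  qed
  ultimately show ?thesis
    using assms(1) unfolding AT_orientation_def by simp
qed

lemma orientation_outdeg_gt:
  assumes "is_orientation G D" "finite D" "S \<subseteq> edges G" "finite (\<Union>S)" "card (\<Union>S) * k < card S"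
  shows "\<exists>v\<in>\<Union>S. k < outdeg D v"
proof (rule ccontr)
  assume "\<not> ?thesis"
  then have small: "outdeg D v \<le> k" if "v \<in> \<Union>S" for v
    using that by force
  let ?out = "\<lambda>v. {a \<in> D. fst a = v}"
  have "S \<subseteq> (\<lambda>a. {fst a, snd a}) ` (\<Union>v\<in>\<Union>S. ?out v)"
  proof
    fix e assume "e \<in> S"
    then obtain a where "a \<in> D" "{fst a, snd a} = e"
      using orientation_edge_arc[OF assms(1)] assms(3) by blast
    with \<open>e \<in> S\<close> show "e \<in> (\<lambda>a. {fst a, snd a}) ` (\<Union>v\<in>\<Union>S. ?out v)" by blast
  qed
  moreover have "finite (\<Union>v\<in>\<Union>S. ?out v)"
    using assms(2) by (rule finite_subset[rotated]) blast
  ultimately have "card S \<le> card (\<Union>v\<in>\<Union>S. ?out v)"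
    by (meson card_image_le card_mono finite_imageI order_trans)
  also have "\<dots> \<le> (\<Sum>v\<in>\<Union>S. outdeg D v)"
    unfolding outdeg_def using assms(4) by (rule card_UN_le)
  also have "\<dots> \<le> card (\<Union>S) * k"
    using sum_bounded_above[of "\<Union>S" "outdeg D" k] small by simp
  finally show False
    using assms(5) by simp
qed

lemma AT_eqI:
  assumes "AT_orientation G D" "\<And>v. v \<in> verts G \<Longrightarrow> outdeg D v \<le> k"
    "\<And>D'. is_orientation G D' \<Longrightarrow> \<exists>v\<in>verts G. k \<le> outdeg D' v"
  shows "AT G = k + 1"
  unfolding AT_def
proof (rule Least_equality)
  show "\<exists>D. AT_orientation G D \<and> (\<forall>v\<in>verts G. outdeg D v + 1 \<le> k + 1)"
    using assms(1,2) by auto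
  show "k + 1 \<le> k'" if "\<exists>D. AT_orientation G D \<and> (\<forall>v\<in>verts G. outdeg D v + 1 \<le> k')" for k'
    using that assms(3) unfolding AT_orientation_def by fastforce
qed

section \<open>The Q-sum of two paths\<close>

abbreviation path_Q_sum :: "nat \<Rightarrow> nat \<Rightarrow> ((nat + nat set) \<times> nat) graph" where
  "path_Q_sum n m \<equiv> Q_sum (path_graph n) (path_graph m)"

inductive forward_arc :: "nat \<Rightarrow> nat \<Rightarrow> (nat + nat set) \<times> nat \<Rightarrow> (nat + nat set) \<times> nat \<Rightarrow> bool"
  for n m where
  vertical: "i < n \<Longrightarrow> Suc a < m \<Longrightarrow> forward_arc n m (Inl i, a) (Inl i, Suc a)"
| vertex_edge: "Suc i < n \<Longrightarrow> a < m \<Longrightarrow> forward_arc n m (Inl i, a) (Inr {i, Suc i}, a)"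
| edge_vertex: "Suc i < n \<Longrightarrow> a < m \<Longrightarrow> forward_arc n m (Inr {i, Suc i}, a) (Inl (Suc i), a)"
| edge_edge: "Suc (Suc i) < n \<Longrightarrow> a < m \<Longrightarrow>
    forward_arc n m (Inr {i, Suc i}, a) (Inr {Suc i, Suc (Suc i)}, a)"

lemma edges_path_graph: "edges (path_graph n) = {{i, Suc i} | i. Suc i < n}"
  by (simp add: path_graph_def edges_def)

lemma edge_path_graphI: "Suc i < n \<Longrightarrow> {i, Suc i} \<in> edges (path_graph n)"
  unfolding edges_path_graph by (rule CollectI, rule exI[of _ i]) simp

lemma edges_Q_graph_path_graph:
  "edges (Q_graph (path_graph n)) =
     {{Inl x, Inr e} | x e. e \<in> edges (path_graph n) \<and> x \<in> e} \<union>
     {{Inr e, Inr e'} | e e'. e \<in> edges (path_graph n) \<and> e' \<in> edges (path_graph n) \<and> e \<noteq> e' \<and> e \<inter> e' \<noteq> {}}"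
  by (simp add: Q_graph_def edges_def)

lemma edges_Q_sum_path_graph:
  "edges (path_Q_sum n m) =
     {{(Inl x, a), (Inl x, b)} | x a b. x < n \<and> {a, b} \<in> edges (path_graph m)} \<union>
     {{(u, a), (v, a)} | u v a. a < m \<and> {u, v} \<in> edges (Q_graph (path_graph n))}"
  by (simp add: Q_sum_def edges_def verts_def path_graph_def)

lemma edge_path_Q_sum_vertical:
  "x < n \<Longrightarrow> Suc a < m \<Longrightarrow> {(Inl x, a), (Inl x, Suc a)} \<in> edges (path_Q_sum n m)"
  unfolding edges_Q_sum_path_graph edges_path_graph by blast

lemma edge_path_Q_sum_horizontal:
  "{u, v} \<in> edges (Q_graph (path_graph n)) \<Longrightarrow> a < m \<Longrightarrow> {(u, a), (v, a)} \<in> edges (path_Q_sum n m)"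
  unfolding edges_Q_sum_path_graph by blast

lemma edge_Q_graph_path_vertex_edge:
  "Suc i < n \<Longrightarrow> x \<in> {i, Suc i} \<Longrightarrow> {Inl x, Inr {i, Suc i}} \<in> edges (Q_graph (path_graph n))"
  unfolding edges_Q_graph_path_graph
  by (rule UnI1, rule CollectI, intro exI[of _ x] exI[of _ "{i, Suc i}"]) (simp add: edge_path_graphI)

lemma edge_Q_graph_path_edge_edge:
  "Suc (Suc i) < n \<Longrightarrow> {Inr {i, Suc i}, Inr {Suc i, Suc (Suc i)}} \<in> edges (Q_graph (path_graph n))"
  unfolding edges_Q_graph_path_graph
  by (rule UnI2, rule CollectI, intro exI[of _ "{i, Suc i}"] exI[of _ "{Suc i, Suc (Suc i)}"])
    (simp add: edge_path_graphI doubleton_eq_iff)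

lemma forward_arc_edge:
  assumes "forward_arc n m p q"
  shows "{p, q} \<in> edges (path_Q_sum n m)"
  using assms
proof (cases rule: forward_arc.cases)
  case (vertical i a)
  then show ?thesis by (simp add: edge_path_Q_sum_vertical)
next
  case (vertex_edge i a)
  then show ?thesis by (simp add: edge_path_Q_sum_horizontal edge_Q_graph_path_vertex_edge)
next
  case (edge_vertex i a)
  then show ?thesis
    using edge_path_Q_sum_horizontal[OF edge_Q_graph_path_vertex_edge[of i n "Suc i"]]
    by (simp add: insert_commute)
next
  case (edge_edge i a)
  then show ?thesis by (simp add: edge_path_Q_sum_horizontal edge_Q_graph_path_edge_edge)
qed

lemma edge_forward_arc:
  assumes "e \<in> edges (path_Q_sum n m)"
  obtains p q where "e = {p, q}" "forward_arc n m p q"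
  using assms unfolding edges_Q_sum_path_graph
proof (elim UnE CollectE exE conjE)
  fix x a b
  assume e: "e = {(Inl x, a), (Inl x, b)}" "x < n" "{a, b} \<in> edges (path_graph m)"
  then obtain j where j: "{a, b} = {j, Suc j}" "Suc j < m"
    unfolding edges_path_graph by blast
  then have "e = {(Inl x, j), (Inl x, Suc j)}"
    using e(1) by (auto simp: doubleton_eq_iff)
  then show thesis
    using that forward_arc.vertical[OF e(2) j(2)] by blast
next
  fix u v a
  assume e: "e = {(u, a), (v, a)}" "a < m" and "{u, v} \<in> edges (Q_graph (path_graph n))"
  then show thesis
    unfolding edges_Q_graph_path_graph edges_path_graph
  proof (elim UnE CollectE exE conjE)
    fix x f j
    assume uv: "{u, v} = {Inl x, Inr f}" "f = {j, Suc j}" "Suc j < n" "x \<in> f"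
    have e': "e = {(Inl x, a), (Inr f, a)}"
      using e(1) uv(1) by (auto simp: doubleton_eq_iff)
    from uv(2,4) consider "x = j" | "x = Suc j"
      by blast
    then show thesis
    proof cases
      case 1
      then show thesis
        using that[OF _ forward_arc.vertex_edge[OF uv(3) e(2)]] e' uv(2) by simp
    next
      case 2
      then show thesis
        using that[OF _ forward_arc.edge_vertex[OF uv(3) e(2)]] e' uv(2) by (simp add: insert_commute)
    qed
  next
    fix f f' j k
    assume uv: "{u, v} = {Inr f, Inr f'}" "f = {j, Suc j}" "Suc j < n" "f' = {k, Suc k}" "Suc k < n"
      "f \<noteq> f'" "f \<inter> f' \<noteq> {}"
    have e': "e = {(Inr f, a), (Inr f', a)}"
      using e(1) uv(1) by (auto simp: doubleton_eq_iff)
    have "k = Suc j \<or> j = Suc k"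
      using uv(2,4,6,7) by auto
    then show thesis
    proof
      assume "k = Suc j"
      then show thesis
        using that[OF _ forward_arc.edge_edge[of j n a m]] e' uv(2,4,5) e(2) by simp
    next
      assume "j = Suc k"
      then show thesis
        using that[OF _ forward_arc.edge_edge[of k n a m]] e' uv(2,3,4) e(2) by (simp add: insert_commute)
    qed
  qed
qed

lemma edges_path_Q_sum:
  "edges (path_Q_sum n m) = (\<lambda>(p, q). {p, q}) ` {(p, q). forward_arc n m p q}"
proof
  show "edges (path_Q_sum n m) \<subseteq> (\<lambda>(p, q). {p, q}) ` {(p, q). forward_arc n m p q}"
    by (force elim: edge_forward_arc)
  show "(\<lambda>(p, q). {p, q}) ` {(p, q). forward_arc n m p q} \<subseteq> edges (path_Q_sum n m)"
    using forward_arc_edge by auto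
qed

(* The edge {i, i+1} of P_n sits between its endpoints on Q(P_n): \<Sum>{i, i+1} = 2i + 1. *)
fun level :: "(nat + nat set) \<times> nat \<Rightarrow> nat" where
  "level (Inl i, a) = 2 * i + a"
| "level (Inr e, a) = \<Sum>e + a"

lemma forward_arc_level: "forward_arc n m p q \<Longrightarrow> level p < level q"
  by (erule forward_arc.cases) auto

lemma forward_arc_successors: "\<exists>x y. \<forall>q. forward_arc n m p q \<longrightarrow> q = x \<or> q = y"
proof (cases p)
  case (Pair u a)
  show ?thesis
  proof (cases u)
    case (Inl i)
    then show ?thesis
      using Pair
      by (intro exI[of _ "(Inl i, Suc a)"] exI[of _ "(Inr {i, Suc i}, a)"])
        (auto elim: forward_arc.cases)
  next
    case (Inr f)
    then show ?thesis
      using Pair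
      by (intro exI[of _ "(Inl (Suc (Min f)), a)"] exI[of _ "(Inr {Suc (Min f), Suc (Suc (Min f))}, a)"])
        (auto elim: forward_arc.cases)
  qed
qed

lemma verts_path_Q_sum:
  "verts (path_Q_sum n m) = (Inl ` {0..<n} \<union> Inr ` edges (path_graph n)) \<times> {0..<m}"
  by (simp add: Q_sum_def Q_graph_def path_graph_def verts_def edges_def)

lemma forward_arc_verts:
  assumes "forward_arc n m p q"
  shows "p \<in> verts (path_Q_sum n m) \<and> q \<in> verts (path_Q_sum n m)"
proof -
  have Inl: "(Inl i, a) \<in> verts (path_Q_sum n m)" if "i < n" "a < m" for i a
    using that unfolding verts_path_Q_sum by simp
  have Inr: "(Inr {i, Suc i}, a) \<in> verts (path_Q_sum n m)" if "Suc i < n" "a < m" for i a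
    using that edge_path_graphI[OF that(1)] unfolding verts_path_Q_sum by auto
  from assms show ?thesis
    by (cases rule: forward_arc.cases) (simp_all add: Inl Inr)
qed

lemma edges_path_Q_sum_subset_verts: "\<Union>(edges (path_Q_sum n m)) \<subseteq> verts (path_Q_sum n m)"
  using forward_arc_verts by (auto simp: edges_path_Q_sum)

lemma finite_verts_path_Q_sum: "finite (verts (path_Q_sum n m))"
proof -
  have "{{i, Suc i} | i. Suc i < n} = (\<lambda>i. {i, Suc i}) ` {..<n - 1}"
    by auto
  then show ?thesis
    unfolding verts_path_Q_sum edges_path_graph by simp
qed

lemma finite_orientation_path_Q_sum: "is_orientation (path_Q_sum n m) D \<Longrightarrow> finite D"
  using finite_orientation edges_path_Q_sum_subset_verts finite_verts_path_Q_sum by blast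

lemma forward_orientation: "is_orientation (path_Q_sum n m) {(p, q). forward_arc n m p q}"
proof (rule is_orientationI[OF edges_path_Q_sum])
  show "(q, p) \<notin> {(p, q). forward_arc n m p q}" if "(p, q) \<in> {(p, q). forward_arc n m p q}" for p q
    using that forward_arc_level[of n m p q] forward_arc_level[of n m q p] by auto
qed

lemma AT_forward_orientation: "AT_orientation (path_Q_sum n m) {(p, q). forward_arc n m p q}"
proof (rule AT_orientation_if_eulerian_even)
  show "finite {(p, q). forward_arc n m p q}"
    using forward_orientation by (rule finite_orientation_path_Q_sum)
  show "even (card A)"
    if "A \<subseteq> {(p, q). forward_arc n m p q}" "eulerian (verts (path_Q_sum n m)) A" for A
  proof -
    have "A = {}"
    proof (rule eulerian_ranked_empty[OF _ that(2)])
      show "finite A"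
        using that(1) \<open>finite {(p, q). forward_arc n m p q}\<close> by (rule finite_subset)
      show "snd ` A \<subseteq> verts (path_Q_sum n m)" "\<And>x y. (x, y) \<in> A \<Longrightarrow> level x < level y"
        using that(1) forward_arc_verts forward_arc_level by fastforce+
    qed
    then show ?thesis by simp
  qed
qed (rule forward_orientation)

lemma outdeg_forward_orientation: "outdeg {(p, q). forward_arc n m p q} v \<le> 2"
proof -
  obtain x y where "{w. forward_arc n m v w} \<subseteq> {x, y}"
    using forward_arc_successors[of n m v] by blast
  then have "card {w. forward_arc n m v w} \<le> card {x, y}"
    by (rule card_mono[rotated]) simp
  also have "\<dots> \<le> 2"
    by (simp add: card_insert_if)
  finally show ?thesis
    by (simp add: outdeg_conv_card)
qed

(* P_2 +_Q P_2 is a 6-cycle; this is its cyclic orientation. *)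
definition hexagon_orientation :: "(((nat + nat set) \<times> nat) \<times> ((nat + nat set) \<times> nat)) set" where
  "hexagon_orientation =
     {((Inl 0, 0), (Inr {0, 1}, 0)), ((Inr {0, 1}, 0), (Inl 1, 0)), ((Inl 1, 0), (Inl 1, 1)),
      ((Inl 1, 1), (Inr {0, 1}, 1)), ((Inr {0, 1}, 1), (Inl 0, 1)), ((Inl 0, 1), (Inl 0, 0))}"

lemma forward_arcs_2_2:
  "{(p, q). forward_arc 2 2 p q} =
     {((Inl 0, 0), (Inr {0, 1}, 0)), ((Inr {0, 1}, 0), (Inl 1, 0)), ((Inl 1, 0), (Inl 1, 1)),
      ((Inl 0, 0), (Inl 0, 1)), ((Inl 0, 1), (Inr {0, 1}, 1)), ((Inr {0, 1}, 1), (Inl 1, 1))}"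
  (is "?F = ?H")
proof (intro equalityI subsetI)
  fix a assume "a \<in> ?F"
  then obtain p q where "forward_arc 2 2 p q" "a = (p, q)"
    by blast
  then show "a \<in> ?H"
    by (cases rule: forward_arc.cases) (auto simp: less_2_cases_iff)
next
  fix a assume "a \<in> ?H"
  then show "a \<in> ?F"
    using forward_arc.intros[of 0 2 0 2] forward_arc.intros[of 1 2 0 2] forward_arc.intros[of 0 2 1 2]
    by auto
qed

lemma hexagon_orientation: "is_orientation (path_Q_sum 2 2) hexagon_orientation"
proof (rule is_orientationI)
  show "edges (path_Q_sum 2 2) = (\<lambda>(x, y). {x, y}) ` hexagon_orientation"
    unfolding edges_path_Q_sum forward_arcs_2_2 hexagon_orientation_def by (simp add: insert_commute)
  show "\<And>x y. (x, y) \<in> hexagon_orientation \<Longrightarrow> (y, x) \<notin> hexagon_orientation"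
    by (auto simp: hexagon_orientation_def)
qed

lemma single_valued_hexagon_orientation: "single_valued hexagon_orientation"
  by (auto simp: single_valued_def hexagon_orientation_def)

lemma outdeg_hexagon_orientation: "outdeg hexagon_orientation v \<le> 1"
  by (rule outdeg_le_1_if_single_valued[OF _ single_valued_hexagon_orientation])
    (simp add: hexagon_orientation_def)

lemma AT_hexagon_orientation: "AT_orientation (path_Q_sum 2 2) hexagon_orientation"
proof (rule AT_orientation_if_eulerian_even[OF hexagon_orientation])
  show fin: "finite hexagon_orientation"
    by (simp add: hexagon_orientation_def)
  show "even (card A)"
    if A: "A \<subseteq> hexagon_orientation" "eulerian (verts (path_Q_sum 2 2)) A" for A
  proof (cases "A = {}")
    case False
    have closed: "(v, w) \<in> A" if "(u, v) \<in> A" "(v, w) \<in> hexagon_orientation" for u v w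
      using eulerian_single_valued_closed[OF A(1) fin single_valued_hexagon_orientation A(2) _ that]
        orientation_arc_in_verts(2)[OF hexagon_orientation edges_path_Q_sum_subset_verts] that(1) A(1)
      by blast
    let ?v0 = "(Inl 0, 0)" and ?v1 = "(Inr {0, 1}, 0)" and ?v2 = "(Inl 1, 0)"
      and ?v3 = "(Inl 1, 1)" and ?v4 = "(Inr {0, 1}, 1)" and ?v5 = "(Inl 0, 1)"
    have H: "hexagon_orientation =
        {(?v0, ?v1), (?v1, ?v2), (?v2, ?v3), (?v3, ?v4), (?v4, ?v5), (?v5, ?v0)}"
      by (simp add: hexagon_orientation_def)
    have "(?v0, ?v1) \<in> A \<Longrightarrow> (?v1, ?v2) \<in> A" "(?v1, ?v2) \<in> A \<Longrightarrow> (?v2, ?v3) \<in> A"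
      "(?v2, ?v3) \<in> A \<Longrightarrow> (?v3, ?v4) \<in> A" "(?v3, ?v4) \<in> A \<Longrightarrow> (?v4, ?v5) \<in> A"
      "(?v4, ?v5) \<in> A \<Longrightarrow> (?v5, ?v0) \<in> A" "(?v5, ?v0) \<in> A \<Longrightarrow> (?v0, ?v1) \<in> A"
      by (rule closed, assumption, simp add: H)+
    moreover obtain c where "c \<in> A"
      using False by blast
    ultimately have "hexagon_orientation \<subseteq> A"
      using A(1) unfolding H by blast
    then have "A = hexagon_orientation"
      using A(1) by blast
    then show ?thesis
      by (simp add: hexagon_orientation_def)
  qed simp
qed

lemma path_Q_sum_outdeg_gt:
  assumes "is_orientation (path_Q_sum n m) D" "S \<subseteq> edges (path_Q_sum n m)"
    "finite (\<Union>S)" "card (\<Union>S) * k < card S"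
  shows "\<exists>v\<in>verts (path_Q_sum n m). k < outdeg D v"
  using orientation_outdeg_gt[OF assms(1) finite_orientation_path_Q_sum[OF assms(1)] assms(2-4)]
    assms(2) edges_path_Q_sum_subset_verts by blast

lemma path_Q_sum_outdeg_pos:
  assumes "is_orientation (path_Q_sum n m) D" "Suc 0 < n" "0 < m"
  shows "\<exists>v\<in>verts (path_Q_sum n m). 1 \<le> outdeg D v"
proof -
  have "{{(Inl 0, 0), (Inr {0, Suc 0}, 0)}} \<subseteq> edges (path_Q_sum n m)"
    using forward_arc_edge[OF forward_arc.vertex_edge[OF assms(2,3)]] by simp
  from path_Q_sum_outdeg_gt[OF assms(1) this, of 0] show ?thesis
    by (simp add: Suc_le_eq)
qed

lemma path_Q_sum_outdeg_gt_1_wide: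
  assumes "Suc (Suc i) < n" "Suc a < m" "is_orientation (path_Q_sum n m) D"
  shows "\<exists>v\<in>verts (path_Q_sum n m). 1 < outdeg D v"
proof -
  let ?v = "\<lambda>b. (Inl (Suc i), b)" and ?e = "\<lambda>b. (Inr {i, Suc i}, b)"
    and ?f = "\<lambda>b. (Inr {Suc i, Suc (Suc i)}, b)"
  define S where "S = {{?e a, ?v a}, {?v a, ?f a}, {?e a, ?f a},
    {?e (Suc a), ?v (Suc a)}, {?v (Suc a), ?f (Suc a)}, {?e (Suc a), ?f (Suc a)}, {?v a, ?v (Suc a)}}"
  show ?thesis
  proof (rule path_Q_sum_outdeg_gt[OF assms(3), of S])
    show "S \<subseteq> edges (path_Q_sum n m)"
      unfolding S_def using assms(1,2)
      by (auto intro!: forward_arc_edge forward_arc.intros)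
    show "card (\<Union>S) * 1 < card S"
      unfolding S_def by (simp add: card_insert_if doubleton_eq_iff)
  qed (simp add: S_def)
qed

lemma path_Q_sum_outdeg_gt_1_tall:
  assumes "Suc i < n" "Suc (Suc a) < m" "is_orientation (path_Q_sum n m) D"
  shows "\<exists>v\<in>verts (path_Q_sum n m). 1 < outdeg D v"
proof -
  let ?u = "\<lambda>b. (Inl i, b)" and ?e = "\<lambda>b. (Inr {i, Suc i}, b)" and ?v = "\<lambda>b. (Inl (Suc i), b)"
  define S where "S = {{?u a, ?e a}, {?e a, ?v a}, {?u (Suc a), ?e (Suc a)}, {?e (Suc a), ?v (Suc a)},
    {?u (Suc (Suc a)), ?e (Suc (Suc a))}, {?e (Suc (Suc a)), ?v (Suc (Suc a))},
    {?u a, ?u (Suc a)}, {?u (Suc a), ?u (Suc (Suc a))}, {?v a, ?v (Suc a)}, {?v (Suc a), ?v (Suc (Suc a))}}"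
  show ?thesis
  proof (rule path_Q_sum_outdeg_gt[OF assms(3), of S])
    show "S \<subseteq> edges (path_Q_sum n m)"
      unfolding S_def using assms(1,2)
      by (auto intro!: forward_arc_edge forward_arc.intros)
    show "card (\<Union>S) * 1 < card S"
      unfolding S_def by (simp add: card_insert_if doubleton_eq_iff)
  qed (simp add: S_def)
qed

lemma path_Q_sum_outdeg_ge_2:
  assumes "is_orientation (path_Q_sum n m) D" "2 \<le> n" "2 \<le> m" "3 \<le> n \<or> 3 \<le> m"
  shows "\<exists>v\<in>verts (path_Q_sum n m). 2 \<le> outdeg D v"
proof -
  have "Suc (Suc 0) < n \<and> Suc 0 < m \<or> Suc 0 < n \<and> Suc (Suc 0) < m"
    using assms(2-4) by auto
  then have "\<exists>v\<in>verts (path_Q_sum n m). 1 < outdeg D v"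
    using path_Q_sum_outdeg_gt_1_wide[OF _ _ assms(1)] path_Q_sum_outdeg_gt_1_tall[OF _ _ assms(1)]
    by blast
  then show ?thesis
    by (simp add: Suc_le_eq numeral_2_eq_2)
qed

theorem corollary3p9:
  fixes n m :: nat
  assumes "n \<ge> 2" and "m \<ge> 2"
  shows "AT (Q_sum (path_graph n) (path_graph m)) = (if n = 2 \<and> m = 2 then 2 else 3)"
proof (cases "n = 2 \<and> m = 2")
  case True
  have "AT (path_Q_sum 2 2) = 1 + 1"
  proof (rule AT_eqI[OF AT_hexagon_orientation outdeg_hexagon_orientation])
    show "\<exists>v\<in>verts (path_Q_sum 2 2). 1 \<le> outdeg D v" if "is_orientation (path_Q_sum 2 2) D" for D
      using path_Q_sum_outdeg_pos[OF that] by simp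
  qed
  with True show ?thesis by simp
next
  case False
  with assms have "3 \<le> n \<or> 3 \<le> m" by auto
  have "AT (path_Q_sum n m) = 2 + 1"
  proof (rule AT_eqI[OF AT_forward_orientation outdeg_forward_orientation])
    show "\<exists>v\<in>verts (path_Q_sum n m). 2 \<le> outdeg D v" if "is_orientation (path_Q_sum n m) D" for D
      using path_Q_sum_outdeg_ge_2[OF that assms \<open>3 \<le> n \<or> 3 \<le> m\<close>] .
  qed
  with False show ?thesis by simp
qed

end
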